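(* Let $\mu$ be a positive Borel measure on $\mathbb{R}$, absolutely continuous with respect to Lebesgue measure, with finite moments of all orders, supported on a set $E\subseteq\mathbb{R}$ with infinitely many points, and let $c\in\mathbb{R}\setminus E$ and $N>0$. With the notation of the context, for every $n\ge1$, $$Q_n^{c,N}(x)=P_n(x)+\Lambda_n^c\,P_{n-1}(x),\qquad \Lambda_n^c=\Lambda_n^c(N)=\frac{\pi_{n-1}-r_{n-1}}{1+NB_n^c}-\pi_{n-1},$$ where $\pi_{n-1}=\frac{P_n(c)}{P_{n-1}(c)}$, $r_{n-1}=\frac{F_n(c)}{F_{n-1}(c)}$ and $B_n^c=\frac{-Q_n^c(c)P_{n-1}(c)}{\|P_{n-1}\|_\mu^2}$. In particular $\Lambda_n^c$ does not depend on $x$.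
   Context: $\{P_n\}_{n\ge0}$ is the monic orthogonal polynomial sequence (MOPS) for $\mu$, $\|f\|_\mu^2=\int_E f^2\,d\mu$. $F_n(s)=\int_E \frac{P_n(x)}{x-s}\,d\mu(x)$ for $s\in\mathbb{C}\setminus E$ (functions of the second kind), with the convention $F_{-1}(c)=1$. $\{Q_n^c\}_{n\ge0}$ is the MOPS with respect to $\langle f,g\rangle_\nu=\int_E f(x)g(x)\frac{1}{x-c}d\mu(x)$. $\{Q_n^{c,N}\}_{n\ge0}$ is the MOPS with respect to $\langle f,g\rangle_{\nu_N}=\int_E f(x)g(x)\frac{1}{x-c}d\mu(x)+Nf(c)g(c)$, i.e. for the Geronimus perturbed measure $\frac{1}{x-c}d\mu(x)+N\delta(x-c)$. *)

theory Defs
  imports "HOL-Analysis.Analysis" "HOL-Computational_Algebra.Polynomial"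
begin

definition msupport :: "real measure \<Rightarrow> real set" where
  "msupport \<mu> = {x. \<forall>e>0. emeasure \<mu> {x - e <..< x + e} > 0}"

(* a monic orthogonal polynomial sequence for a (possibly non-positive) bilinear form *)
definition is_MOPS :: "(real poly \<Rightarrow> real poly \<Rightarrow> real) \<Rightarrow> (nat \<Rightarrow> real poly) \<Rightarrow> bool" where
  "is_MOPS ip P \<longleftrightarrow> (\<forall>n. degree (P n) = n \<and> lead_coeff (P n) = 1 \<and>
      ip (P n) (P n) \<noteq> 0 \<and> (\<forall>m<n. ip (P n) (P m) = 0))"

definition ip_mu :: "real measure \<Rightarrow> real poly \<Rightarrow> real poly \<Rightarrow> real" where
  "ip_mu \<mu> f g = (\<integral>x. poly f x * poly g x \<partial>\<mu>)"

definition ip_nu :: "real measure \<Rightarrow> real \<Rightarrow> real poly \<Rightarrow> real poly \<Rightarrow> real" where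
  "ip_nu \<mu> c f g = (\<integral>x. poly f x * poly g x / (x - c) \<partial>\<mu>)"

definition ip_nuN :: "real measure \<Rightarrow> real \<Rightarrow> real \<Rightarrow> real poly \<Rightarrow> real poly \<Rightarrow> real" where
  "ip_nuN \<mu> c N f g = ip_nu \<mu> c f g + N * poly f c * poly g c"

definition second_kind :: "real measure \<Rightarrow> (nat \<Rightarrow> real poly) \<Rightarrow> nat \<Rightarrow> real \<Rightarrow> real" where
  "second_kind \<mu> P n s = (\<integral>x. poly (P n) x / (x - s) \<partial>\<mu>)"

end

theory Submission
  imports Defs
begin

text \<open>Since \<open>(x - c) d\<nu>\<^sub>N = d\<mu>\<close>, one has \<open>\<langle>f, (x - c) g\<rangle>\<^sub>\<nu>\<^sub>N = \<langle>f, g\<rangle>\<^sub>\<mu>\<close>.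
  Hence \<open>Q\<^sub>n\<^sup>c\<^sup>,\<^sup>N - P\<^sub>n\<close>, of degree \<open>< n\<close>, is \<open>\<mu>\<close>-orthogonal to \<open>P\<^sub>k\<close> for \<open>k < n - 1\<close>,
  so \<open>Q\<^sub>n\<^sup>c\<^sup>,\<^sup>N = P\<^sub>n + \<Lambda> P\<^sub>n\<^sub>-\<^sub>1\<close>, and \<open>\<langle>Q\<^sub>n\<^sup>c\<^sup>,\<^sup>N, 1\<rangle>\<^sub>\<nu>\<^sub>N = 0\<close> gives
  \<open>\<Lambda> = -(F\<^sub>n(c) + N P\<^sub>n(c)) / (F\<^sub>n\<^sub>-\<^sub>1(c) + N P\<^sub>n\<^sub>-\<^sub>1(c))\<close>. Writing
  \<open>Q\<^sub>n\<^sup>c(x) = (x - c) s(x) + Q\<^sub>n\<^sup>c(c)\<close> with \<open>s\<close> monic of degree \<open>n - 1\<close>, orthogonality of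
  \<open>Q\<^sub>n\<^sup>c\<close> to \<open>P\<^sub>n\<^sub>-\<^sub>1\<close> yields \<open>Q\<^sub>n\<^sup>c(c) F\<^sub>n\<^sub>-\<^sub>1(c) = -\<parallel>P\<^sub>n\<^sub>-\<^sub>1\<parallel>\<^sup>2\<close>, which turns \<open>\<Lambda>\<close>
  into the stated form.\<close>

locale symmetric_bilinear_poly =
  fixes B :: "real poly \<Rightarrow> real poly \<Rightarrow> real"
  assumes add_right: "B f (g + h) = B f g + B f h"
    and smult_right: "B f (smult a g) = a * B f g"
    and commute: "B f g = B g f"
begin

lemma zero_right [simp]: "B f 0 = 0"
  using smult_right[of f 0 f] by simp

lemma diff_right: "B f (g - h) = B f g - B f h"
  using add_right[of f "g - h" h] by simp

lemma sum_right: "B f (\<Sum>k\<in>A. smult (a k) (g k)) = (\<Sum>k\<in>A. a k * B f (g k))"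
  by (induction A rule: infinite_finite_induct) (simp_all add: add_right smult_right)

lemma MOPS_orthogonal:
  assumes "is_MOPS B R"
  shows "B (R j) (R k) = (if j = k then B (R j) (R j) else 0)"
proof (cases j k rule: linorder_cases)
  case greater
  then show ?thesis using assms unfolding is_MOPS_def by simp
next
  case less
  then have "B (R k) (R j) = 0" using assms unfolding is_MOPS_def by simp
  with less show ?thesis using commute by simp
qed simp

end

lemma monic_basis_expansion:
  fixes R :: "nat \<Rightarrow> 'a::comm_ring_1 poly"
  assumes R: "\<And>k. degree (R k) = k" "\<And>k. lead_coeff (R k) = 1"
    and "degree q \<le> n"
  shows "\<exists>a. q = (\<Sum>k\<le>n. smult (a k) (R k)) \<and> a n = coeff q n"
  using \<open>degree q \<le> n\<close>
proof (induction n arbitrary: q)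
  case 0
  have "R 0 = 1"
    using degree_0_id[of "R 0"] R[of 0] by (simp add: one_pCons)
  moreover have "q = [:coeff q 0:]"
    using degree_0_id[of q] 0 by simp
  ultimately have "q = smult (coeff q 0) (R 0)"
    by simp
  then show ?case by auto
next
  case (Suc n)
  define r where "r = q - smult (coeff q (Suc n)) (R (Suc n))"
  have "degree r \<le> n"
  proof (rule degree_le, intro allI impI)
    fix i assume "n < i"
    show "coeff r i = 0"
    proof (cases "i = Suc n")
      case True with R show ?thesis by (simp add: r_def)
    next
      case False with \<open>n < i\<close> Suc.prems R show ?thesis
        by (simp add: r_def coeff_eq_0)
    qed
  qed
  then obtain a where a: "r = (\<Sum>k\<le>n. smult (a k) (R k))" using Suc.IH by blast
  define a' where "a' = a(Suc n := coeff q (Suc n))"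
  have "(\<Sum>k\<le>n. smult (a' k) (R k)) = r"
    unfolding a a'_def by (rule sum.cong) auto
  then have "q = (\<Sum>k\<le>Suc n. smult (a' k) (R k))"
    by (simp add: r_def a'_def)
  moreover have "a' (Suc n) = coeff q (Suc n)" by (simp add: a'_def)
  ultimately show ?case by blast
qed

context symmetric_bilinear_poly
begin

lemma MOPS_inner_le_degree:
  assumes R: "is_MOPS B R" and "degree q \<le> n"
  shows "B (R n) q = coeff q n * B (R n) (R n)"
proof -
  obtain a where a: "q = (\<Sum>k\<le>n. smult (a k) (R k))" and an: "a n = coeff q n"
    using monic_basis_expansion[of R q n] R \<open>degree q \<le> n\<close> unfolding is_MOPS_def by blast
  have "B (R n) q = (\<Sum>k\<le>n. a k * B (R n) (R k))" unfolding a by (rule sum_right)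
  also have "\<dots> = a n * B (R n) (R n)"
    by (subst MOPS_orthogonal[OF R]) (simp add: if_distrib cong: if_cong)
  finally show ?thesis by (simp add: an)
qed

lemma MOPS_inner_lower_degree:
  assumes "is_MOPS B R" and "degree q < n"
  shows "B (R n) q = 0"
  using MOPS_inner_le_degree[OF assms(1), of q n] assms(2) by (simp add: coeff_eq_0)

lemma MOPS_eq_smult_if_orthogonal:
  assumes R: "is_MOPS B R" and "degree q \<le> n" and orth: "\<And>k. k < n \<Longrightarrow> B q (R k) = 0"
  shows "q = smult (coeff q n) (R n)"
proof -
  obtain a where a: "q = (\<Sum>k\<le>n. smult (a k) (R k))" and an: "a n = coeff q n"
    using monic_basis_expansion[of R q n] R \<open>degree q \<le> n\<close> unfolding is_MOPS_def by blast
  have "a j = 0" if "j < n" for j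
  proof -
    have "0 = B (R j) q" using orth[OF that] commute by simp
    also have "\<dots> = (\<Sum>k\<le>n. a k * B (R j) (R k))" unfolding a by (rule sum_right)
    also have "\<dots> = a j * B (R j) (R j)"
      using that by (subst MOPS_orthogonal[OF R]) (simp add: if_distrib cong: if_cong)
    finally show ?thesis using R unfolding is_MOPS_def by simp
  qed
  then have "q = smult (a n) (R n)"
    unfolding a by (simp add: lessThan_Suc_atMost[symmetric])
  then show ?thesis by (simp add: an)
qed

end

lemma ip_nuN_0: "ip_nuN \<mu> c 0 = ip_nu \<mu> c"
  by (simp add: fun_eq_iff ip_nuN_def)

lemma ip_nuN_one: "ip_nuN \<mu> c N (P k) 1 = second_kind \<mu> P k c + N * poly (P k) c"
  by (simp add: ip_nuN_def ip_nu_def second_kind_def)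

lemma geronimus_coefficient_eq:
  fixes F\<^sub>m F\<^sub>n h p\<^sub>m p\<^sub>n q N :: "'a::field"
  assumes "F\<^sub>m \<noteq> 0" "p\<^sub>m \<noteq> 0" "h \<noteq> 0" "F\<^sub>m + N * p\<^sub>m \<noteq> 0" and q: "q * F\<^sub>m = - h"
  shows "- (F\<^sub>n + N * p\<^sub>n) / (F\<^sub>m + N * p\<^sub>m)
           = (p\<^sub>n / p\<^sub>m - F\<^sub>n / F\<^sub>m) / (1 + N * (- q * p\<^sub>m / h)) - p\<^sub>n / p\<^sub>m"
proof -
  define d where "d = F\<^sub>m + N * p\<^sub>m"
  have q_eq: "q = - h / F\<^sub>m"
    using q \<open>F\<^sub>m \<noteq> 0\<close> by (simp add: field_simps)
  have "1 + N * (- q * p\<^sub>m / h) = d / F\<^sub>m"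
    using \<open>F\<^sub>m \<noteq> 0\<close> \<open>h \<noteq> 0\<close> unfolding q_eq by (simp add: d_def field_simps)
  moreover have "- (F\<^sub>n + N * p\<^sub>n) / d = (p\<^sub>n / p\<^sub>m - F\<^sub>n / F\<^sub>m) / (d / F\<^sub>m) - p\<^sub>n / p\<^sub>m"
    using assms unfolding d_def[symmetric]
    by (simp add: field_simps) (simp add: d_def algebra_simps)
  ultimately show ?thesis
    by (simp add: d_def)
qed

lemma borel_measurable_poly [measurable]: "poly p \<in> borel_measurable borel"
  for p :: "real poly"
  by (intro borel_measurable_continuous_onI continuous_intros)

locale measure_off_point =
  fixes \<mu> :: "real measure" and c :: real
  assumes sets_eq: "sets \<mu> = sets borel"
    and moments: "\<And>k::nat. integrable \<mu> (\<lambda>x. x ^ k)"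
    and c_notin_support: "c \<notin> msupport \<mu>"
begin

lemma integrable_poly: "integrable \<mu> (poly p)"
proof -
  have "integrable \<mu> (\<lambda>x. \<Sum>i\<le>degree p. coeff p i * x ^ i)"
    using moments by (intro Bochner_Integration.integrable_sum integrable_mult_right)
  also have "(\<lambda>x. \<Sum>i\<le>degree p. coeff p i * x ^ i) = poly p"
    by (simp add: fun_eq_iff poly_altdef)
  finally show ?thesis .
qed

lemma AE_dist_ge: "\<exists>e>0. AE x in \<mu>. e \<le> \<bar>x - c\<bar>"
proof -
  obtain e where "e > 0" and "emeasure \<mu> {c - e <..< c + e} = 0"
    using c_notin_support unfolding msupport_def by (auto simp: not_less)
  then have "{c - e <..< c + e} \<in> null_sets \<mu>"
    using sets_eq by (simp add: null_sets_def)
  from AE_not_in[OF this] have "AE x in \<mu>. e \<le> \<bar>x - c\<bar>"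
    by eventually_elim auto
  with \<open>e > 0\<close> show ?thesis by blast
qed

lemma integrable_poly_div: "integrable \<mu> (\<lambda>x. poly p x / (x - c))"
proof -
  obtain e where "e > 0" and far: "AE x in \<mu>. e \<le> \<bar>x - c\<bar>"
    using AE_dist_ge by blast
  show ?thesis
  proof (rule Bochner_Integration.integrable_bound)
    show "integrable \<mu> (\<lambda>x. poly p x / e)"
      using integrable_poly by (rule integrable_divide)
    show "(\<lambda>x. poly p x / (x - c)) \<in> borel_measurable \<mu>"
      unfolding measurable_cong_sets[OF sets_eq refl] by measurable
    show "AE x in \<mu>. norm (poly p x / (x - c)) \<le> norm (poly p x / e)"
      using far by eventually_elim (use \<open>e > 0\<close> in \<open>simp add: abs_divide divide_left_mono\<close>)
  qed
qed

lemma integrable_poly_mult: "integrable \<mu> (\<lambda>x. poly f x * poly g x)"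
proof -
  have "(\<lambda>x. poly f x * poly g x) = poly (f * g)"
    by (simp add: fun_eq_iff)
  then show ?thesis using integrable_poly by simp
qed

sublocale mu: symmetric_bilinear_poly "ip_mu \<mu>"
  using integrable_poly_mult
  by unfold_locales (auto simp: ip_mu_def distrib_left mult.commute mult.left_commute)

sublocale nuN: symmetric_bilinear_poly "ip_nuN \<mu> c N" for N
  using integrable_poly_div[of "f * g" for f g]
  by unfold_locales
    (auto simp: ip_nuN_def ip_nu_def distrib_left add_divide_distrib mult.commute mult.left_commute
       simp flip: integral_mult_right_zero)

lemma ip_nuN_linear_factor: "ip_nuN \<mu> c N f ([:-c, 1:] * s) = ip_mu \<mu> f s"
proof -
  obtain e where "e > 0" and far: "AE x in \<mu>. e \<le> \<bar>x - c\<bar>"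
    using AE_dist_ge by blast
  have "(\<integral>x. poly f x * poly ([:-c, 1:] * s) x / (x - c) \<partial>\<mu>) = (\<integral>x. poly f x * poly s x \<partial>\<mu>)"
  proof (rule integral_cong_AE)
    show "AE x in \<mu>. poly f x * poly ([:-c, 1:] * s) x / (x - c) = poly f x * poly s x"
      using far by eventually_elim (use \<open>e > 0\<close> in \<open>auto simp: field_simps\<close>)
  qed (unfold measurable_cong_sets[OF sets_eq refl], measurable)+
  then show ?thesis unfolding ip_nuN_def ip_nu_def ip_mu_def by simp
qed

lemma ip_nuN_synthetic_div:
  "ip_nuN \<mu> c N f q = ip_mu \<mu> f (synthetic_div q c) + poly q c * ip_nuN \<mu> c N f 1"
proof -
  have "ip_nuN \<mu> c N f q = ip_nuN \<mu> c N f ([:-c, 1:] * synthetic_div q c + [:poly q c:])"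
    by (simp only: synthetic_div_correct')
  also have "[:poly q c:] = smult (poly q c) 1"
    by simp
  finally show ?thesis
    by (simp only: nuN.add_right nuN.smult_right ip_nuN_linear_factor)
qed

context
  fixes P :: "nat \<Rightarrow> real poly"
  assumes P: "is_MOPS (ip_mu \<mu>) P"
begin

lemma ip_nuN_MOPS_le_degree:
  assumes "degree q \<le> m"
  shows "ip_nuN \<mu> c N (P m) q = poly q c * ip_nuN \<mu> c N (P m) 1"
proof -
  have "degree (synthetic_div q c) \<le> m"
    using assms by (simp add: degree_synthetic_div)
  moreover have "coeff (synthetic_div q c) m = 0"
  proof (cases "degree q = 0")
    case True then show ?thesis by (simp add: synthetic_div_eq_0_iff[THEN iffD2])
  next
    case False then show ?thesis
      using assms by (intro coeff_eq_0) (simp add: degree_synthetic_div)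
  qed
  ultimately have "ip_mu \<mu> (P m) (synthetic_div q c) = 0"
    using mu.MOPS_inner_le_degree[OF P, of "synthetic_div q c" m] by simp
  then show ?thesis
    using ip_nuN_synthetic_div[of N "P m" q] by simp
qed

lemma ip_nuN_MOPS_one_neq_0:
  assumes R: "is_MOPS (ip_nuN \<mu> c N) R"
  shows "ip_nuN \<mu> c N (P m) 1 \<noteq> 0"
proof
  assume zero: "ip_nuN \<mu> c N (P m) 1 = 0"
  have "degree (P m) = m" "lead_coeff (P m) = 1"
    using P unfolding is_MOPS_def by blast+
  then have P_m: "degree (P m) \<le> m" "coeff (P m) m = 1"
    by simp_all
  have "ip_nuN \<mu> c N (R m) (R m) = ip_nuN \<mu> c N (R m) (P m)"
    using nuN.MOPS_inner_le_degree[OF R, of "P m" m] P_m by simp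
  also have "\<dots> = ip_nuN \<mu> c N (P m) (R m)"
    by (rule nuN.commute)
  also have "\<dots> = 0"
    using ip_nuN_MOPS_le_degree[of "R m" m N] R zero unfolding is_MOPS_def by simp
  finally show False
    using R unfolding is_MOPS_def by simp
qed

lemma MOPS_nuN_connection:
  assumes R: "is_MOPS (ip_nuN \<mu> c N) R"
  shows "R (Suc m) = P (Suc m)
           + smult (- ip_nuN \<mu> c N (P (Suc m)) 1 / ip_nuN \<mu> c N (P m) 1) (P m)"
proof -
  define n where "n = Suc m"
  define D where "D = R n - P n"
  have R_n: "degree (R n) = n" "lead_coeff (R n) = 1"
    using R unfolding is_MOPS_def by blast+
  have P_deg: "degree (P k) = k" "lead_coeff (P k) = 1" for k
    using P unfolding is_MOPS_def by blast+
  have "degree D \<le> m"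
  proof (rule degree_le, intro allI impI)
    fix i assume "m < i"
    then consider "i = n" | "n < i"
      unfolding n_def by linarith
    then show "coeff D i = 0"
      using R_n P_deg[of n] by cases (simp_all add: D_def coeff_eq_0)
  qed
  moreover have "ip_mu \<mu> D (P k) = 0" if "k < m" for k
  proof -
    have "degree ([:-c, 1:] * P k) < n"
      using degree_mult_le[of "[:-c, 1:]" "P k"] P_deg[of k] that by (simp add: n_def)
    then have "ip_nuN \<mu> c N (R n) ([:-c, 1:] * P k) = 0"
      by (rule nuN.MOPS_inner_lower_degree[OF R])
    then have R_orth: "ip_mu \<mu> (P k) (R n) = 0"
      by (simp only: ip_nuN_linear_factor mu.commute[of "P k" "R n"])
    have P_orth: "ip_mu \<mu> (P k) (P n) = 0"
      using mu.MOPS_orthogonal[OF P, of k n] that by (simp add: n_def)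
    have "ip_mu \<mu> D (P k) = ip_mu \<mu> (P k) (R n) - ip_mu \<mu> (P k) (P n)"
      unfolding D_def by (subst mu.commute) (rule mu.diff_right)
    then show ?thesis
      using R_orth P_orth by simp
  qed
  ultimately have D: "D = smult (coeff D m) (P m)"
    by (rule mu.MOPS_eq_smult_if_orthogonal[OF P])
  have "0 = ip_nuN \<mu> c N (R n) 1"
    by (rule nuN.MOPS_inner_lower_degree[OF R, symmetric]) (simp add: n_def)
  also have "\<dots> = ip_nuN \<mu> c N 1 (R n)"
    by (rule nuN.commute)
  also have "R n = P n + smult (coeff D m) (P m)"
    using D by (simp add: D_def algebra_simps)
  finally have "ip_nuN \<mu> c N (P n) 1 + coeff D m * ip_nuN \<mu> c N (P m) 1 = 0"
    by (simp add: nuN.add_right nuN.smult_right) (metis nuN.commute)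
  then have "coeff D m = - ip_nuN \<mu> c N (P n) 1 / ip_nuN \<mu> c N (P m) 1"
    using ip_nuN_MOPS_one_neq_0[OF R, of m] by (simp add: field_simps)
  with \<open>R n = P n + smult (coeff D m) (P m)\<close> show ?thesis
    by (simp add: n_def)
qed

lemma MOPS_nuN_at_point:
  assumes R: "is_MOPS (ip_nuN \<mu> c N) R"
  shows "poly (R (Suc m)) c * ip_nuN \<mu> c N (P m) 1 = - ip_mu \<mu> (P m) (P m)"
proof -
  define s where "s = synthetic_div (R (Suc m)) c"
  have R_deg: "degree (R (Suc m)) = Suc m" "lead_coeff (R (Suc m)) = 1"
    using R unfolding is_MOPS_def by blast+
  have P_m: "degree (P m) = m"
    using P unfolding is_MOPS_def by blast
  have s_deg: "degree s = m"
    using R_deg by (simp add: s_def degree_synthetic_div)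
  have "coeff (R (Suc m)) (Suc m) = coeff ([:-c, 1:] * s + [:poly (R (Suc m)) c:]) (Suc m)"
    by (simp only: s_def synthetic_div_correct')
  then have "coeff s m = 1"
    using R_deg s_deg by (simp add: coeff_eq_0)
  have "0 = ip_nuN \<mu> c N (P m) (R (Suc m))"
    using nuN.MOPS_inner_lower_degree[OF R, of "P m" "Suc m"] P_m by (simp add: nuN.commute)
  also have "\<dots> = ip_mu \<mu> (P m) s + poly (R (Suc m)) c * ip_nuN \<mu> c N (P m) 1"
    unfolding s_def by (rule ip_nuN_synthetic_div)
  also have "ip_mu \<mu> (P m) s = ip_mu \<mu> (P m) (P m)"
    using mu.MOPS_inner_le_degree[OF P, of s m] s_deg \<open>coeff s m = 1\<close> by simp
  finally show ?thesis
    by linarith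
qed

lemma MOPS_nuN_closed_form:
  assumes Q: "is_MOPS (ip_nu \<mu> c) Q" and R: "is_MOPS (ip_nuN \<mu> c N) R"
    and P_c: "poly (P m) c \<noteq> 0"
  shows "R (Suc m) = P (Suc m) + smult
           ((poly (P (Suc m)) c / poly (P m) c
               - second_kind \<mu> P (Suc m) c / second_kind \<mu> P m c)
             / (1 + N * (- poly (Q (Suc m)) c * poly (P m) c / ip_mu \<mu> (P m) (P m)))
            - poly (P (Suc m)) c / poly (P m) c)
           (P m)"
proof -
  have Q0: "is_MOPS (ip_nuN \<mu> c 0) Q"
    using Q by (simp add: ip_nuN_0)
  have "- ip_nuN \<mu> c N (P (Suc m)) 1 / ip_nuN \<mu> c N (P m) 1
      = (poly (P (Suc m)) c / poly (P m) c - second_kind \<mu> P (Suc m) c / second_kind \<mu> P m c)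
          / (1 + N * (- poly (Q (Suc m)) c * poly (P m) c / ip_mu \<mu> (P m) (P m)))
        - poly (P (Suc m)) c / poly (P m) c"
    unfolding ip_nuN_one
  proof (rule geronimus_coefficient_eq)
    show "second_kind \<mu> P m c \<noteq> 0"
      using ip_nuN_MOPS_one_neq_0[OF Q0, of m] by (simp add: ip_nuN_one)
    show "second_kind \<mu> P m c + N * poly (P m) c \<noteq> 0"
      using ip_nuN_MOPS_one_neq_0[OF R, of m] by (simp add: ip_nuN_one)
    show "poly (Q (Suc m)) c * second_kind \<mu> P m c = - ip_mu \<mu> (P m) (P m)"
      using MOPS_nuN_at_point[OF Q0, of m] by (simp add: ip_nuN_one)
    show "ip_mu \<mu> (P m) (P m) \<noteq> 0"
      using P unfolding is_MOPS_def by blast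
  qed (rule P_c)
  then show ?thesis
    using MOPS_nuN_connection[OF R, of m] by simp
qed

end

end

theorem proposition1:
  fixes \<mu> :: "real measure" and c N :: real
    and P Q QN :: "nat \<Rightarrow> real poly" and n :: nat
  assumes borel: "sets \<mu> = sets borel"
    and ac: "absolutely_continuous lborel \<mu>"
    and moments: "\<And>k::nat. integrable \<mu> (\<lambda>x. x ^ k)"
    and inf_supp: "infinite (msupport \<mu>)"
    and c_out: "c \<notin> msupport \<mu>"
    and N_pos: "N > 0"
    and P_MOPS: "is_MOPS (ip_mu \<mu>) P"
    and Q_MOPS: "is_MOPS (ip_nu \<mu> c) Q"
    and QN_MOPS: "is_MOPS (ip_nuN \<mu> c N) QN"
    and n_ge: "n \<ge> 1"
    and Pc: "poly (P (n - 1)) c \<noteq> 0"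
  shows "QN n = P n + smult
           ((poly (P n) c / poly (P (n - 1)) c
               - second_kind \<mu> P n c / second_kind \<mu> P (n - 1) c)
             / (1 + N * (- poly (Q n) c * poly (P (n - 1)) c / ip_mu \<mu> (P (n - 1)) (P (n - 1))))
            - poly (P n) c / poly (P (n - 1)) c)
           (P (n - 1))"
proof -
  \<comment> \<open>\<open>ac\<close>, \<open>inf_supp\<close> and \<open>N_pos\<close> only serve to guarantee that the three MOPS exist,
    which is assumed here.\<close>
  interpret measure_off_point \<mu> c
    using borel moments c_out by unfold_locales
  obtain m where "n = Suc m"
    using n_ge by (cases n) auto
  then show ?thesis
    using MOPS_nuN_closed_form[OF P_MOPS Q_MOPS QN_MOPS, of m] Pc by simp
qed

end
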